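(* For the $8$-pleated bowtie $B_8$, the umbral index satisfies $\mathfrak{u}(B_8)=1$; that is, the set of spectral rank 1 vertices of $B_8$ differs from the set of spectral rank 1 vertices of its clique-shadow $\partial^*B_8$.
   Context: For a connected $k$-uniform hypergraph $H=([n],E)$ and $x\in\mathbb{R}^n$, write $x^e=\prod_{v\in e}x_v$ and $F_H(x)=k\sum_{e\in E}x^e$. The principal eigenvector $y$ of $H$ is the unique strictly positive $y$ with $\|y\|_k=1$ and $\rho\, y_i^{k-1}=\sum_{e\ni i} y^{e\setminus\{i\}}$ for all $i$, where $\rho=\max_{\|z\|_k^k=1}F_H(z)$. The clique-shadow $\partial^*H$ is the multigraph on $[n]$ where $\{u,v\}$ has multiplicity $\mu(uv)=|\{e\in E:u,v\in e\}|$; its principal eigenvector is the positive Perron eigenvector of its adjacency matrix (entries $\mu(uv)$), normalized to unit $2$-norm. The spectral ranking of a (hyper)graph orders vertices by decreasing value of its principal eigenvector, tied vertices sharing a rank; spectral rank 1 vertices are those with maximal entry. The umbral index $\mathfrak{u}(H)$ is the least rank index at which the spectral rankings of $H$ and $\partial^*H$ differ (and $0$ if they coincide). The $t$-pleated bowtie $B_t$ is the $3$-uniform hypergraph on vertices $c,\ell_1,\dots,\ell_{t+2},r_1,\dots,r_{t+2}$ with edge set $\{\{c,r_1,r_2\}\}\cup\{\{c,\ell_1,\ell_j\}: 2\le j\le t+2\}\cup\{\{r_1,r_2,r_j\}: 3\le j\le t+2\}$. *)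

theory Defs
  imports Complex_Main
begin

text \<open>Vectors are functions from vertices to reals
(only their values on V matter; normalised eigenvectors are taken to vanish off V).\<close>

definition F_hyp :: "nat \<Rightarrow> 'v set set \<Rightarrow> ('v \<Rightarrow> real) \<Rightarrow> real" where
  "F_hyp k E x = real k * (\<Sum>e\<in>E. \<Prod>v\<in>e. x v)"

definition spec_radius_hyp :: "nat \<Rightarrow> 'v set \<Rightarrow> 'v set set \<Rightarrow> real" where
  "spec_radius_hyp k V E = Sup {F_hyp k E z | z. (\<Sum>v\<in>V. \<bar>z v\<bar> ^ k) = 1}"

definition principal_eigvec_hyp :: "nat \<Rightarrow> 'v set \<Rightarrow> 'v set set \<Rightarrow> ('v \<Rightarrow> real)" where
  "principal_eigvec_hyp k V E = (THE y.
      (\<forall>v\<in>V. y v > 0) \<and> (\<forall>v. v \<notin> V \<longrightarrow> y v = 0) \<and>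
      (\<Sum>v\<in>V. y v ^ k) = 1 \<and>
      (\<forall>i\<in>V. spec_radius_hyp k V E * y i ^ (k - 1)
               = (\<Sum>e\<in>{e\<in>E. i \<in> e}. \<Prod>u\<in>e - {i}. y u)))"

text \<open>Multiplicity of the pair {u,v} (u \<noteq> v) in the clique-shadow; no loops.\<close>
definition shadow_mult :: "'v set set \<Rightarrow> 'v \<Rightarrow> 'v \<Rightarrow> nat" where
  "shadow_mult E u v = (if u = v then 0 else card {e\<in>E. u \<in> e \<and> v \<in> e})"

definition principal_eigvec_shadow :: "'v set \<Rightarrow> 'v set set \<Rightarrow> ('v \<Rightarrow> real)" where
  "principal_eigvec_shadow V E = (THE x.
      (\<forall>v\<in>V. x v > 0) \<and> (\<forall>v. v \<notin> V \<longrightarrow> x v = 0) \<and>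
      (\<Sum>v\<in>V. x v ^ 2) = 1 \<and>
      (\<exists>mu::real. \<forall>u\<in>V. mu * x u = (\<Sum>v\<in>V. real (shadow_mult E u v) * x v)))"

definition rank_values :: "'v set \<Rightarrow> ('v \<Rightarrow> real) \<Rightarrow> real list" where
  "rank_values V x = rev (sorted_list_of_set (x ` V))"

definition rank_class :: "'v set \<Rightarrow> ('v \<Rightarrow> real) \<Rightarrow> nat \<Rightarrow> 'v set" where
  "rank_class V x i = {v\<in>V. 1 \<le> i \<and> i \<le> length (rank_values V x)
                              \<and> x v = rank_values V x ! (i - 1)}"

definition umbral_index :: "nat \<Rightarrow> 'v set \<Rightarrow> 'v set set \<Rightarrow> nat" where
  "umbral_index k V E =
     (let y = principal_eigvec_hyp k V E; z = principal_eigvec_shadow V E in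
      if \<forall>i\<ge>1. rank_class V y i = rank_class V z i then 0
      else (LEAST i. 1 \<le> i \<and> rank_class V y i \<noteq> rank_class V z i))"

datatype bt_vertex = C | L nat | R nat

definition bowtie_V :: "nat \<Rightarrow> bt_vertex set" where
  "bowtie_V t = {C} \<union> L ` {1..t+2} \<union> R ` {1..t+2}"

definition bowtie_E :: "nat \<Rightarrow> bt_vertex set set" where
  "bowtie_E t = {{C, R 1, R 2}}
              \<union> {{C, L 1, L j} | j. 2 \<le> j \<and> j \<le> t + 2}
              \<union> {{R 1, R 2, R j} | j. 3 \<le> j \<and> j \<le> t + 2}"

end

theory Submission
  imports Defs
begin

text \<open>
  For a connected 3-uniform hypergraph, every positive solution \<open>y\<close> of the eigen-equations
  \<open>\<lambda> y(i)\<^sup>2 = \<Sum>{y(u) y(v) | {i, u, v} \<in> E}\<close> is, after normalisation, the principal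
  eigenvector: AM-GM on each edge gives \<open>F(z) \<le> \<lambda> \<Sum> |z|\<^sup>3\<close> with equality at \<open>y\<close>, so \<open>\<lambda>\<close> is
  the spectral radius; for a second positive eigenvector every AM-GM step is tight, so its ratio
  to \<open>y\<close> is constant along edges, hence everywhere. The same holds for the clique-shadow, where
  tightness comes from the ground state transform of its symmetric adjacency matrix. It
  therefore suffices to exhibit positive eigenvectors of \<open>B\<^sub>8\<close> and of its shadow. Both can be
  taken constant on the vertex classes \<open>C\<close>, \<open>L 1\<close>, \<open>L j\<close> (\<open>j \<ge> 2\<close>), \<open>R 1 = R 2\<close>, \<open>R j\<close> (\<open>j \<ge> 3\<close>),
  and the five resulting scalar equations are solved through one real root each. The shadow
  eigenvector is largest at \<open>C\<close>, while the hypergraph eigenvector is larger at \<open>R 1\<close> than at \<open>C\<close>.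
\<close>

section \<open>Three-term AM-GM\<close>

lemma card3_arith_geom_mean:
  fixes w :: "'a \<Rightarrow> real"
  assumes "card e = 3" and "\<And>v. v \<in> e \<Longrightarrow> w v \<ge> 0"
  shows "3 * (\<Prod>v\<in>e. w v) \<le> (\<Sum>v\<in>e. w v ^ 3)"
    and "3 * (\<Prod>v\<in>e. w v) = (\<Sum>v\<in>e. w v ^ 3) \<Longrightarrow> u \<in> e \<Longrightarrow> v \<in> e \<Longrightarrow> w u = w v"
proof -
  obtain x y z where e: "e = {x, y, z}" "x \<noteq> y" "y \<noteq> z" "x \<noteq> z"
    using assms(1) by (metis card_3_iff)
  define a b c where "a = w x" and "b = w y" and "c = w z"
  have nonneg: "a \<ge> 0" "b \<ge> 0" "c \<ge> 0"
    using assms(2) e by (auto simp: a_def b_def c_def)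
  have prod: "(\<Prod>v\<in>e. w v) = a * b * c" and sum: "(\<Sum>v\<in>e. w v ^ 3) = a^3 + b^3 + c^3"
    using e by (simp_all add: a_def b_def c_def)
  have gap: "2 * (a^3 + b^3 + c^3 - 3 * (a * b * c)) = (a + b + c) * ((a - b)^2 + (b - c)^2 + (c - a)^2)"
    by algebra
  have "0 \<le> 2 * (a^3 + b^3 + c^3 - 3 * (a * b * c))"
    unfolding gap using nonneg by simp
  then show "3 * (\<Prod>v\<in>e. w v) \<le> (\<Sum>v\<in>e. w v ^ 3)"
    unfolding prod sum by simp
  assume eq: "3 * (\<Prod>v\<in>e. w v) = (\<Sum>v\<in>e. w v ^ 3)" and uv: "u \<in> e" "v \<in> e"
  have "a = b \<and> b = c"
  proof (cases "a + b + c = 0")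
    case True
    then show ?thesis using nonneg by linarith
  next
    case False
    have "(a + b + c) * ((a - b)^2 + (b - c)^2 + (c - a)^2) = 0"
      using eq unfolding prod sum gap[symmetric] by simp
    then have "(a - b)^2 + (b - c)^2 + (c - a)^2 = 0" using False by simp
    moreover have "(a - b)^2 \<ge> 0" "(b - c)^2 \<ge> 0" "(c - a)^2 \<ge> 0" by simp_all
    ultimately have "(a - b)^2 = 0" "(b - c)^2 = 0" by linarith+
    then show ?thesis by simp
  qed
  then show "w u = w v" using uv e(1) by (auto simp: a_def b_def c_def)
qed

definition hyp_connected :: "'v set \<Rightarrow> 'v set set \<Rightarrow> bool" where
  "hyp_connected V E \<longleftrightarrow> (\<forall>u\<in>V. \<forall>v\<in>V. (u, v) \<in> (\<Union>e\<in>E. e \<times> e)\<^sup>*)"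

lemma hyp_connectedI:
  assumes "\<And>u. u \<in> V \<Longrightarrow> (w, u) \<in> (\<Union>e\<in>E. e \<times> e)\<^sup>*"
  shows "hyp_connected V E"
proof -
  have sym: "(\<Union>e\<in>E. e \<times> e)\<inverse> = (\<Union>e\<in>E. e \<times> e)" by auto
  have "(u, w) \<in> (\<Union>e\<in>E. e \<times> e)\<^sup>*" if "u \<in> V" for u
    using rtrancl_converseI[OF assms[OF that]] by (simp only: sym)
  then show ?thesis
    unfolding hyp_connected_def using assms by (blast intro: rtrancl_trans)
qed

lemma hyp_connected_const:
  assumes "hyp_connected V E" and "\<And>e u v. e \<in> E \<Longrightarrow> u \<in> e \<Longrightarrow> v \<in> e \<Longrightarrow> f u = f v"
    and "u \<in> V" "v \<in> V"
  shows "f u = f v"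
proof -
  have "(u, v) \<in> (\<Union>e\<in>E. e \<times> e)\<^sup>*"
    using assms(1,3,4) by (simp add: hyp_connected_def)
  then show ?thesis
    by (induction rule: rtrancl_induct) (use assms(2) in auto)
qed

section \<open>Principal eigenvectors of 3-uniform hypergraphs\<close>

definition hyp_eigenpair :: "nat \<Rightarrow> 'v set \<Rightarrow> 'v set set \<Rightarrow> real \<Rightarrow> ('v \<Rightarrow> real) \<Rightarrow> bool" where
  "hyp_eigenpair k V E lam y \<longleftrightarrow>
     (\<forall>i\<in>V. lam * y i ^ (k - 1) = (\<Sum>e\<in>{e\<in>E. i \<in> e}. \<Prod>u\<in>e - {i}. y u))"

lemma proportional_normalized_eq:
  fixes y w :: "'v \<Rightarrow> real"
  assumes "finite V" "n > 0"
    and pos: "\<And>u. u \<in> V \<Longrightarrow> y u > 0" "\<And>u. u \<in> V \<Longrightarrow> w u > 0"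
    and ratio: "\<And>u v. u \<in> V \<Longrightarrow> v \<in> V \<Longrightarrow> w u / y u = w v / y v"
    and norm: "(\<Sum>u\<in>V. w u ^ n) = (\<Sum>u\<in>V. y u ^ n)"
    and v: "v \<in> V"
  shows "w v = y v"
proof -
  define \<kappa> where "\<kappa> = w v / y v"
  have w: "w u = \<kappa> * y u" if "u \<in> V" for u
    using ratio[OF that v] pos[OF that] by (simp add: \<kappa>_def field_simps)
  have "\<kappa> > 0" using pos v by (simp add: \<kappa>_def)
  have "(\<Sum>u\<in>V. y u ^ n) > 0" using assms(1) pos v by (intro sum_pos) auto
  moreover have "\<kappa> ^ n * (\<Sum>u\<in>V. y u ^ n) = (\<Sum>u\<in>V. y u ^ n)"
    using norm w by (simp add: sum_distrib_left power_mult_distrib)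
  ultimately have "\<kappa> ^ n = 1 ^ n" by simp
  then have "\<kappa> = 1" using \<open>\<kappa> > 0\<close> \<open>n > 0\<close> by (metis less_imp_le power_eq_imp_eq_base zero_le_one)
  then show ?thesis using w v by simp
qed

locale finite_hypergraph =
  fixes V :: "'v set" and E :: "'v set set"
  assumes finite_vertices: "finite V" and edge_subset: "e \<in> E \<Longrightarrow> e \<subseteq> V"
begin

lemma finite_edges: "finite E"
  using finite_vertices edge_subset by (metis Pow_iff finite_Pow_iff rev_finite_subset subsetI)

lemma edge_vertex: "e \<in> E \<Longrightarrow> u \<in> e \<Longrightarrow> u \<in> V"
  using edge_subset by blast

lemma finite_edge: "e \<in> E \<Longrightarrow> finite e"
  using finite_vertices edge_subset finite_subset by blast

lemma sum_vertices_edges_at: "(\<Sum>i\<in>V. \<Sum>e\<in>{e\<in>E. i \<in> e}. g i e) = (\<Sum>e\<in>E. \<Sum>i\<in>e. g i e)"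
proof -
  have "{i\<in>V. i \<in> e} = e" if "e \<in> E" for e
    using edge_subset[OF that] by auto
  then show ?thesis
    using sum.swap_restrict[OF finite_vertices finite_edges, of g "\<lambda>i e. i \<in> e"] by simp
qed

lemma edge_prod_ratio:
  fixes y z :: "'v \<Rightarrow> real"
  assumes "\<And>u. u \<in> V \<Longrightarrow> y u > 0" and "e \<in> E"
  shows "(\<Prod>u\<in>e. y u) * (\<Prod>u\<in>e. z u / y u) = (\<Prod>u\<in>e. z u)"
proof -
  have "(\<Prod>u\<in>e. y u) > 0" using assms edge_vertex by (simp add: prod_pos)
  then show ?thesis by (simp add: prod_dividef)
qed

lemma hyp_eigenpair_weighted_cubes:
  fixes y z :: "'v \<Rightarrow> real"
  assumes pos: "\<And>u. u \<in> V \<Longrightarrow> y u > 0" and eig: "hyp_eigenpair 3 V E lam y"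
  shows "lam * (\<Sum>v\<in>V. z v ^ 3) = (\<Sum>e\<in>E. (\<Prod>u\<in>e. y u) * (\<Sum>i\<in>e. (z i / y i) ^ 3))"
proof -
  have at_vertex: "(\<Sum>e\<in>{e\<in>E. i \<in> e}. (\<Prod>u\<in>e. y u) * (z i / y i) ^ 3) = lam * z i ^ 3"
    if i: "i \<in> V" for i
  proof -
    have "(\<Sum>e\<in>{e\<in>E. i \<in> e}. (\<Prod>u\<in>e. y u) * (z i / y i) ^ 3)
        = y i * (z i / y i) ^ 3 * (\<Sum>e\<in>{e\<in>E. i \<in> e}. \<Prod>u\<in>e - {i}. y u)"
      by (auto simp: sum_distrib_left prod.remove[OF finite_edge] mult_ac intro!: sum.cong)
    also have "\<dots> = y i * (z i / y i) ^ 3 * (lam * y i ^ 2)"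
      using eig i by (simp add: hyp_eigenpair_def)
    also have "\<dots> = lam * z i ^ 3"
      using pos[OF i] by (simp add: field_simps power2_eq_square power3_eq_cube)
    finally show ?thesis .
  qed
  have "lam * (\<Sum>v\<in>V. z v ^ 3) = (\<Sum>i\<in>V. \<Sum>e\<in>{e\<in>E. i \<in> e}. (\<Prod>u\<in>e. y u) * (z i / y i) ^ 3)"
    by (simp add: at_vertex sum_distrib_left)
  also have "\<dots> = (\<Sum>e\<in>E. (\<Prod>u\<in>e. y u) * (\<Sum>i\<in>e. (z i / y i) ^ 3))"
    by (simp add: sum_vertices_edges_at sum_distrib_left)
  finally show ?thesis .
qed

end

locale three_uniform_hypergraph = finite_hypergraph V E for V :: "'v set" and E +
  assumes card_edge: "e \<in> E \<Longrightarrow> card e = 3"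
begin

lemma F_hyp_le_eigval:
  fixes y z :: "'v \<Rightarrow> real"
  assumes pos: "\<And>u. u \<in> V \<Longrightarrow> y u > 0" and eig: "hyp_eigenpair 3 V E lam y"
  shows "F_hyp 3 E z \<le> lam * (\<Sum>v\<in>V. \<bar>z v\<bar> ^ 3)"
proof -
  have "F_hyp 3 E z \<le> (\<Sum>e\<in>E. 3 * (\<Prod>v\<in>e. \<bar>z v\<bar>))"
    unfolding F_hyp_def sum_distrib_left
    by (intro sum_mono) (simp add: abs_prod[symmetric])
  also have "\<dots> \<le> (\<Sum>e\<in>E. (\<Prod>u\<in>e. y u) * (\<Sum>i\<in>e. (\<bar>z i\<bar> / y i) ^ 3))"
  proof (rule sum_mono)
    fix e assume e: "e \<in> E"
    have ye: "\<And>i. i \<in> e \<Longrightarrow> y i > 0" using pos edge_vertex[OF e] by blast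
    then have amgm: "3 * (\<Prod>i\<in>e. \<bar>z i\<bar> / y i) \<le> (\<Sum>i\<in>e. (\<bar>z i\<bar> / y i) ^ 3)"
      using card_edge[OF e] by (intro card3_arith_geom_mean(1)) (simp_all add: less_imp_le)
    have "3 * (\<Prod>v\<in>e. \<bar>z v\<bar>) = (\<Prod>u\<in>e. y u) * (3 * (\<Prod>i\<in>e. \<bar>z i\<bar> / y i))"
      using edge_prod_ratio[OF pos e, where z="\<lambda>v. \<bar>z v\<bar>"] by (simp add: mult_ac)
    also have "\<dots> \<le> (\<Prod>u\<in>e. y u) * (\<Sum>i\<in>e. (\<bar>z i\<bar> / y i) ^ 3)"
      using amgm ye by (simp add: mult_left_mono less_imp_le prod_nonneg)
    finally show "3 * (\<Prod>v\<in>e. \<bar>z v\<bar>) \<le> (\<Prod>u\<in>e. y u) * (\<Sum>i\<in>e. (\<bar>z i\<bar> / y i) ^ 3)" .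
  qed
  also have "\<dots> = lam * (\<Sum>v\<in>V. \<bar>z v\<bar> ^ 3)"
    by (rule hyp_eigenpair_weighted_cubes[OF pos eig, symmetric])
  finally show ?thesis .
qed

lemma F_hyp_eigvec:
  fixes y :: "'v \<Rightarrow> real"
  assumes pos: "\<And>u. u \<in> V \<Longrightarrow> y u > 0" and eig: "hyp_eigenpair 3 V E lam y"
  shows "F_hyp 3 E y = lam * (\<Sum>v\<in>V. y v ^ 3)"
proof -
  have one: "(y i / y i) ^ 3 = 1" if "e \<in> E" "i \<in> e" for e i
    using pos[OF edge_vertex[OF that]] by simp
  have "(\<Sum>i\<in>e. (y i / y i) ^ 3) = (\<Sum>i\<in>e. 1)" if "e \<in> E" for e
    using one[OF that] by (intro sum.cong) auto
  then have ratio_cubes: "(\<Sum>i\<in>e. (y i / y i) ^ 3) = 3" if "e \<in> E" for e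
    using card_edge[OF that] that by simp
  have "F_hyp 3 E y = (\<Sum>e\<in>E. (\<Prod>u\<in>e. y u) * 3)"
    by (simp add: F_hyp_def sum_distrib_left mult.commute)
  also have "\<dots> = (\<Sum>e\<in>E. (\<Prod>u\<in>e. y u) * (\<Sum>i\<in>e. (y i / y i) ^ 3))"
    by (intro sum.cong refl) (simp only: ratio_cubes)
  also have "\<dots> = lam * (\<Sum>v\<in>V. y v ^ 3)"
    by (rule hyp_eigenpair_weighted_cubes[OF pos eig, symmetric])
  finally show ?thesis .
qed

lemma spec_radius_hyp_eq:
  fixes y :: "'v \<Rightarrow> real"
  assumes pos: "\<And>u. u \<in> V \<Longrightarrow> y u > 0" and eig: "hyp_eigenpair 3 V E lam y"
    and norm: "(\<Sum>v\<in>V. y v ^ 3) = 1"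
  shows "spec_radius_hyp 3 V E = lam"
  unfolding spec_radius_hyp_def
proof (rule cSup_eq_maximum)
  have "(\<Sum>v\<in>V. \<bar>y v\<bar> ^ 3) = 1" using norm pos by (simp add: less_imp_le)
  then show "lam \<in> {F_hyp 3 E z |z. (\<Sum>v\<in>V. \<bar>z v\<bar> ^ 3) = 1}"
    using F_hyp_eigvec[OF pos eig] norm by force
next
  fix x assume "x \<in> {F_hyp 3 E z |z. (\<Sum>v\<in>V. \<bar>z v\<bar> ^ 3) = 1}"
  then obtain z where "x = F_hyp 3 E z" "(\<Sum>v\<in>V. \<bar>z v\<bar> ^ 3) = 1" by blast
  then show "x \<le> lam" using F_hyp_le_eigval[OF pos eig, of z] by simp
qed

text \<open>Two positive eigenvectors for the same eigenvalue make every AM-GM inequality in the proof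
of \<open>F_hyp_le_eigval\<close> tight, since \<open>F_hyp 3 E w = lam * (\<Sum>v\<in>V. w v ^ 3)\<close>.\<close>
lemma hyp_eigvecs_edge_amgm_eq:
  fixes y w :: "'v \<Rightarrow> real"
  assumes pos: "\<And>u. u \<in> V \<Longrightarrow> y u > 0" "\<And>u. u \<in> V \<Longrightarrow> w u > 0"
    and eig: "hyp_eigenpair 3 V E lam y" "hyp_eigenpair 3 V E lam w"
    and e: "e \<in> E"
  shows "3 * (\<Prod>i\<in>e. w i / y i) = (\<Sum>i\<in>e. (w i / y i) ^ 3)"
proof -
  define gap where "gap e = (\<Prod>i\<in>e. y i) * ((\<Sum>i\<in>e. (w i / y i) ^ 3) - 3 * (\<Prod>i\<in>e. w i / y i))" for e
  have gap_nonneg: "gap e \<ge> 0" if "e \<in> E" for e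
  proof -
    have "\<And>i. i \<in> e \<Longrightarrow> w i / y i \<ge> 0"
      using pos edge_vertex[OF that] by (simp add: less_imp_le)
    then have "3 * (\<Prod>i\<in>e. w i / y i) \<le> (\<Sum>i\<in>e. (w i / y i) ^ 3)"
      using card_edge[OF that] by (rule card3_arith_geom_mean(1)[rotated])
    moreover have "(\<Prod>i\<in>e. y i) \<ge> 0" using pos(1) edge_vertex[OF that] by (simp add: less_imp_le prod_nonneg)
    ultimately show ?thesis by (simp add: gap_def)
  qed
  have "(\<Prod>i\<in>e. y i) * (3 * (\<Prod>i\<in>e. w i / y i)) = 3 * (\<Prod>i\<in>e. w i)" if "e \<in> E" for e
    using edge_prod_ratio[where y = y and z = w, OF pos(1) that] by simp
  then have "(\<Sum>e\<in>E. (\<Prod>i\<in>e. y i) * (3 * (\<Prod>i\<in>e. w i / y i))) = (\<Sum>e\<in>E. 3 * (\<Prod>i\<in>e. w i))"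
    by (rule sum.cong[OF refl])
  then have "(\<Sum>e\<in>E. gap e)
      = (\<Sum>e\<in>E. (\<Prod>i\<in>e. y i) * (\<Sum>i\<in>e. (w i / y i) ^ 3)) - (\<Sum>e\<in>E. 3 * (\<Prod>i\<in>e. w i))"
    unfolding gap_def right_diff_distrib sum_subtractf by (simp only:)
  also have "\<dots> = lam * (\<Sum>v\<in>V. w v ^ 3) - F_hyp 3 E w"
    using hyp_eigenpair_weighted_cubes[OF pos(1) eig(1), of w] by (simp add: F_hyp_def sum_distrib_left)
  also have "\<dots> = 0" by (simp add: F_hyp_eigvec[OF pos(2) eig(2)])
  finally have "gap e = 0"
    using e gap_nonneg by (simp add: sum_nonneg_eq_0_iff[OF finite_edges])
  moreover have "(\<Prod>i\<in>e. y i) > 0" using pos(1) edge_vertex[OF e] by (simp add: prod_pos)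
  ultimately show ?thesis by (simp add: gap_def)
qed

lemma hyp_eigvecs_ratio_eq_on_edge:
  fixes y w :: "'v \<Rightarrow> real"
  assumes pos: "\<And>u. u \<in> V \<Longrightarrow> y u > 0" "\<And>u. u \<in> V \<Longrightarrow> w u > 0"
    and eig: "hyp_eigenpair 3 V E lam y" "hyp_eigenpair 3 V E lam w"
    and e: "e \<in> E" and uv: "u \<in> e" "v \<in> e"
  shows "w u / y u = w v / y v"
proof -
  have "\<And>i. i \<in> e \<Longrightarrow> w i / y i \<ge> 0"
    using pos edge_vertex[OF e] by (simp add: less_imp_le)
  then show ?thesis
    using card3_arith_geom_mean(2)[OF card_edge[OF e], where w = "\<lambda>i. w i / y i"]
      hyp_eigvecs_edge_amgm_eq[OF pos eig e] uv by blast
qed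

lemma hyp_eigenpair_scale:
  fixes y y' :: "'v \<Rightarrow> real"
  assumes eig: "hyp_eigenpair 3 V E lam y" and y': "\<And>u. u \<in> V \<Longrightarrow> y' u = y u / \<theta>"
  shows "hyp_eigenpair 3 V E lam y'"
  unfolding hyp_eigenpair_def
proof
  fix i assume i: "i \<in> V"
  have "(\<Prod>u\<in>e - {i}. y' u) = (\<Prod>u\<in>e - {i}. y u) / \<theta> ^ 2" if "e \<in> E" "i \<in> e" for e
  proof -
    have "(\<Prod>u\<in>e - {i}. y' u) = (\<Prod>u\<in>e - {i}. y u / \<theta>)"
      using y' edge_vertex[OF that(1)] by (intro prod.cong) auto
    moreover have "card (e - {i}) = 2"
      using card_edge[OF that(1)] finite_edge[OF that(1)] that(2) by simp
    ultimately show ?thesis by (simp add: prod_dividef)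
  qed
  then have "(\<Sum>e\<in>{e\<in>E. i \<in> e}. \<Prod>u\<in>e - {i}. y' u) = (\<Sum>e\<in>{e\<in>E. i \<in> e}. \<Prod>u\<in>e - {i}. y u) / \<theta> ^ 2"
    by (simp add: sum_divide_distrib)
  also have "\<dots> = lam * y' i ^ (3 - 1)"
    using eig i y'[OF i] by (simp add: hyp_eigenpair_def power_divide)
  finally show "lam * y' i ^ (3 - 1) = (\<Sum>e\<in>{e\<in>E. i \<in> e}. \<Prod>u\<in>e - {i}. y' u)" ..
qed

lemma pos_hyp_eigvec_unique:
  fixes y w :: "'v \<Rightarrow> real"
  assumes conn: "hyp_connected V E"
    and pos: "\<And>u. u \<in> V \<Longrightarrow> y u > 0" "\<And>u. u \<in> V \<Longrightarrow> w u > 0"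
    and eig: "hyp_eigenpair 3 V E lam y" "hyp_eigenpair 3 V E lam w"
    and norm: "(\<Sum>u\<in>V. w u ^ 3) = (\<Sum>u\<in>V. y u ^ 3)" and v: "v \<in> V"
  shows "w v = y v"
proof (rule proportional_normalized_eq[OF finite_vertices _ pos _ norm v])
  show "w u / y u = w u' / y u'" if "u \<in> V" "u' \<in> V" for u u'
    using hyp_connected_const[OF conn _ that, where f = "\<lambda>u. w u / y u"]
      hyp_eigvecs_ratio_eq_on_edge[OF pos eig] by blast
qed simp

lemma principal_eigvec_hyp_eq:
  fixes y :: "'v \<Rightarrow> real"
  assumes conn: "hyp_connected V E" and pos: "\<And>u. u \<in> V \<Longrightarrow> y u > 0"
    and eig: "hyp_eigenpair 3 V E lam y" and v: "v \<in> V"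
  shows "principal_eigvec_hyp 3 V E v = y v / root 3 (\<Sum>u\<in>V. y u ^ 3)"
proof -
  define \<theta> where "\<theta> = root 3 (\<Sum>u\<in>V. y u ^ 3)"
  define y' where "y' u = (if u \<in> V then y u / \<theta> else 0)" for u
  have "(\<Sum>u\<in>V. y u ^ 3) > 0" using finite_vertices pos v by (intro sum_pos) auto
  then have \<theta>: "\<theta> > 0" "\<theta> ^ 3 = (\<Sum>u\<in>V. y u ^ 3)" "\<theta> ^ 3 > 0" by (simp_all add: \<theta>_def)
  have pos': "\<And>u. u \<in> V \<Longrightarrow> y' u > 0" using pos \<theta> by (simp add: y'_def)
  have norm': "(\<Sum>u\<in>V. y' u ^ 3) = 1"
    using \<theta> by (simp add: y'_def power_divide sum_divide_distrib[symmetric])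
  have eig': "hyp_eigenpair 3 V E lam y'" by (rule hyp_eigenpair_scale[OF eig, where \<theta> = \<theta>]) (simp add: y'_def)
  have radius: "spec_radius_hyp 3 V E = lam" by (rule spec_radius_hyp_eq[OF pos' eig' norm'])
  have "principal_eigvec_hyp 3 V E = y'"
    unfolding principal_eigvec_hyp_def radius
  proof (rule the_equality)
    fix w assume "(\<forall>v\<in>V. w v > 0) \<and> (\<forall>v. v \<notin> V \<longrightarrow> w v = 0) \<and> (\<Sum>v\<in>V. w v ^ 3) = 1 \<and>
      (\<forall>i\<in>V. lam * w i ^ (3 - 1) = (\<Sum>e\<in>{e\<in>E. i \<in> e}. \<Prod>u\<in>e - {i}. w u))"
    then have "\<forall>v\<in>V. w v > 0" "\<forall>v. v \<notin> V \<longrightarrow> w v = 0" "(\<Sum>v\<in>V. w v ^ 3) = 1"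
      "hyp_eigenpair 3 V E lam w"
      by (simp_all add: hyp_eigenpair_def)
    then show "w = y'"
      using pos_hyp_eigvec_unique[OF conn pos' _ eig'] norm' by (auto simp: y'_def)
  qed (use pos' norm' eig' in \<open>simp_all add: y'_def hyp_eigenpair_def\<close>)
  then show ?thesis using v by (simp add: y'_def \<theta>_def)
qed

lemma principal_eigvec_hyp_less_iff:
  fixes y :: "'v \<Rightarrow> real"
  assumes "hyp_connected V E" "\<And>u. u \<in> V \<Longrightarrow> y u > 0" "hyp_eigenpair 3 V E lam y"
    and "u \<in> V" "v \<in> V"
  shows "principal_eigvec_hyp 3 V E u < principal_eigvec_hyp 3 V E v \<longleftrightarrow> y u < y v"
proof -
  have "(\<Sum>w\<in>V. y w ^ 3) > 0" using finite_vertices assms(2,4) by (intro sum_pos) auto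
  then show ?thesis
    by (simp add: principal_eigvec_hyp_eq[OF assms(1-3)] assms(4,5) divide_less_cancel)
qed

end

section \<open>Principal eigenvectors of the clique-shadow\<close>

definition shadow_eigenpair :: "'v set \<Rightarrow> 'v set set \<Rightarrow> real \<Rightarrow> ('v \<Rightarrow> real) \<Rightarrow> bool" where
  "shadow_eigenpair V E mu x \<longleftrightarrow> (\<forall>u\<in>V. mu * x u = (\<Sum>v\<in>V. real (shadow_mult E u v) * x v))"

lemma symmetric_pos_eigvecs_same_eigval:
  fixes M :: "'v \<Rightarrow> 'v \<Rightarrow> real" and x p :: "'v \<Rightarrow> real"
  assumes "finite V" "V \<noteq> {}" and sym: "\<And>u v. M u v = M v u"
    and pos: "\<And>u. u \<in> V \<Longrightarrow> x u > 0" "\<And>u. u \<in> V \<Longrightarrow> p u > 0"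
    and eig: "\<And>u. u \<in> V \<Longrightarrow> mu * x u = (\<Sum>v\<in>V. M u v * x v)"
      "\<And>u. u \<in> V \<Longrightarrow> nu * p u = (\<Sum>v\<in>V. M u v * p v)"
  shows "mu = nu"
proof -
  have "mu * (\<Sum>u\<in>V. p u * x u) = (\<Sum>u\<in>V. p u * (mu * x u))"
    by (simp add: sum_distrib_left mult_ac)
  also have "\<dots> = (\<Sum>u\<in>V. \<Sum>v\<in>V. p u * M u v * x v)"
    using eig(1) by (simp add: sum_distrib_left mult_ac)
  also have "\<dots> = (\<Sum>v\<in>V. x v * (\<Sum>u\<in>V. M v u * p u))"
    by (subst sum.swap) (simp add: sym sum_distrib_left mult_ac)
  also have "\<dots> = (\<Sum>v\<in>V. x v * (nu * p v))"
    using eig(2) by simp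
  also have "\<dots> = nu * (\<Sum>u\<in>V. p u * x u)"
    by (simp add: sum_distrib_left mult_ac)
  moreover have "(\<Sum>u\<in>V. p u * x u) > 0"
    using assms(1,2) pos by (intro sum_pos) auto
  ultimately show ?thesis by simp
qed

text \<open>The ground state transform: conjugating a symmetric matrix by a positive eigenvector
turns its quadratic form into a sum of squared differences.\<close>
lemma symmetric_eigvec_ground_state:
  fixes M :: "'v \<Rightarrow> 'v \<Rightarrow> real" and p q :: "'v \<Rightarrow> real"
  assumes "finite V" and sym: "\<And>u v. M u v = M v u"
    and eig: "\<And>u. u \<in> V \<Longrightarrow> mu * p u = (\<Sum>v\<in>V. M u v * p v)"
  shows "(\<Sum>u\<in>V. \<Sum>v\<in>V. M u v * p u * p v * (q u - q v)^2)
       = 2 * (mu * (\<Sum>u\<in>V. (p u * q u)^2) - (\<Sum>u\<in>V. \<Sum>v\<in>V. M u v * (p u * q u) * (p v * q v)))"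
proof -
  have "(\<Sum>u\<in>V. \<Sum>v\<in>V. M u v * p u * p v * q u ^ 2) = (\<Sum>u\<in>V. p u * q u ^ 2 * (\<Sum>v\<in>V. M u v * p v))"
    by (simp add: sum_distrib_left mult_ac)
  also have "\<dots> = (\<Sum>u\<in>V. p u * q u ^ 2 * (mu * p u))"
    using eig by simp
  finally have diag: "(\<Sum>u\<in>V. \<Sum>v\<in>V. M u v * p u * p v * q u ^ 2) = mu * (\<Sum>u\<in>V. (p u * q u)^2)"
    by (simp add: sum_distrib_left power2_eq_square mult_ac)
  have "(\<Sum>u\<in>V. \<Sum>v\<in>V. M u v * p u * p v * q v ^ 2) = (\<Sum>v\<in>V. \<Sum>u\<in>V. M v u * p v * p u * q v ^ 2)"
    by (subst sum.swap) (simp add: sym mult_ac)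
  then have "(\<Sum>u\<in>V. \<Sum>v\<in>V. M u v * p u * p v * q v ^ 2) = mu * (\<Sum>u\<in>V. (p u * q u)^2)"
    using diag by simp
  with diag show ?thesis
    by (simp add: power2_diff algebra_simps sum.distrib sum_subtractf sum_distrib_left)
qed

lemma symmetric_pos_eigvecs_ratio_eq:
  fixes M :: "'v \<Rightarrow> 'v \<Rightarrow> real" and x p :: "'v \<Rightarrow> real"
  assumes "finite V" and sym: "\<And>u v. M u v = M v u" and nonneg: "\<And>u v. M u v \<ge> 0"
    and pos: "\<And>u. u \<in> V \<Longrightarrow> x u > 0" "\<And>u. u \<in> V \<Longrightarrow> p u > 0"
    and eig: "\<And>u. u \<in> V \<Longrightarrow> mu * x u = (\<Sum>v\<in>V. M u v * x v)"
      "\<And>u. u \<in> V \<Longrightarrow> mu * p u = (\<Sum>v\<in>V. M u v * p v)"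
    and uv: "u \<in> V" "v \<in> V" "M u v > 0"
  shows "x u / p u = x v / p v"
proof -
  define q where "q u = x u / p u" for u
  define T where "T u v = M u v * p u * p v * (q u - q v)^2" for u v
  have x: "p u * q u = x u" if "u \<in> V" for u using pos(2)[OF that] by (simp add: q_def)
  have "(\<Sum>u\<in>V. \<Sum>v\<in>V. M u v * (p u * q u) * (p v * q v)) = (\<Sum>u\<in>V. x u * (\<Sum>v\<in>V. M u v * x v))"
    using x by (simp add: sum_distrib_left mult_ac)
  also have "\<dots> = (\<Sum>u\<in>V. x u * (mu * x u))"
    using eig(1) by (intro sum.cong) auto
  also have "\<dots> = mu * (\<Sum>u\<in>V. (p u * q u)^2)"
    using x by (simp add: sum_distrib_left power2_eq_square mult_ac)
  finally have "(\<Sum>u\<in>V. \<Sum>v\<in>V. M u v * (p u * q u) * (p v * q v)) = mu * (\<Sum>u\<in>V. (p u * q u)^2)" .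
  then have "(\<Sum>u\<in>V. \<Sum>v\<in>V. T u v) = 0"
    using symmetric_eigvec_ground_state[OF assms(1) sym eig(2), of q] by (simp add: T_def)
  moreover have T_nonneg: "T u v \<ge> 0" if "u \<in> V" "v \<in> V" for u v
    using that nonneg pos(2) by (simp add: T_def less_imp_le)
  ultimately have "T u v = 0"
    using uv by (simp add: sum_nonneg_eq_0_iff[OF assms(1)] sum_nonneg)
  moreover have "p u > 0" "p v > 0" using uv pos(2) by auto
  ultimately show ?thesis
    using uv by (simp add: T_def q_def)
qed

lemma shadow_mult_commute: "shadow_mult E u v = shadow_mult E v u"
  by (simp add: shadow_mult_def conj_commute eq_commute)

lemma shadow_mult_pos:
  assumes "finite E" "e \<in> E" "u \<in> e" "v \<in> e" "u \<noteq> v"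
  shows "shadow_mult E u v > 0"
  using assms by (auto simp: shadow_mult_def card_gt_0_iff)

context finite_hypergraph
begin

lemma shadow_adjacency_sum:
  "(\<Sum>v\<in>V. real (shadow_mult E u v) * x v) = (\<Sum>e\<in>{e\<in>E. u \<in> e}. \<Sum>v\<in>e - {u}. x v)"
proof -
  have "real (shadow_mult E u v) * x v = (\<Sum>e\<in>{e\<in>E. u \<in> e}. if v \<in> e - {u} then x v else 0)" for v
  proof (cases "u = v")
    case False
    have "(\<Sum>e\<in>{e\<in>E. u \<in> e}. if v \<in> e - {u} then x v else 0)
        = (\<Sum>e\<in>{e\<in>E. u \<in> e}. if v \<in> e then x v else 0)"
      using False by (intro sum.cong) auto
    also have "\<dots> = (\<Sum>e\<in>{e\<in>{e\<in>E. u \<in> e}. v \<in> e}. x v)"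
      using finite_edges by (intro sum.inter_filter[symmetric]) simp
    also have "{e\<in>{e\<in>E. u \<in> e}. v \<in> e} = {e\<in>E. u \<in> e \<and> v \<in> e}" by auto
    finally show ?thesis using False by (simp add: shadow_mult_def)
  qed (simp add: shadow_mult_def)
  then have "(\<Sum>v\<in>V. real (shadow_mult E u v) * x v)
      = (\<Sum>e\<in>{e\<in>E. u \<in> e}. \<Sum>v\<in>V. if v \<in> e - {u} then x v else 0)"
    by (simp add: sum.swap[of _ V])
  also have "\<dots> = (\<Sum>e\<in>{e\<in>E. u \<in> e}. \<Sum>v\<in>e - {u}. x v)"
  proof (rule sum.cong[OF refl])
    fix e assume "e \<in> {e\<in>E. u \<in> e}"
    then have "{v\<in>V. v \<in> e - {u}} = e - {u}" using edge_subset by auto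
    then show "(\<Sum>v\<in>V. if v \<in> e - {u} then x v else 0) = (\<Sum>v\<in>e - {u}. x v)"
      using sum.inter_filter[OF finite_vertices, of x "\<lambda>v. v \<in> e - {u}"] by simp
  qed
  finally show ?thesis .
qed

lemma pos_shadow_eigvec_unique:
  fixes x w :: "'v \<Rightarrow> real"
  assumes conn: "hyp_connected V E"
    and pos: "\<And>u. u \<in> V \<Longrightarrow> x u > 0" "\<And>u. u \<in> V \<Longrightarrow> w u > 0"
    and eig: "shadow_eigenpair V E mu x" "shadow_eigenpair V E nu w"
    and norm: "(\<Sum>u\<in>V. w u ^ 2) = (\<Sum>u\<in>V. x u ^ 2)" and v: "v \<in> V"
  shows "w v = x v"
proof (rule proportional_normalized_eq[OF finite_vertices _ pos _ norm v])
  define M where "M u v = real (shadow_mult E u v)" for u v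
  have M: "\<And>u v. M u v = M v u" "\<And>u v. M u v \<ge> 0"
    by (simp_all add: M_def shadow_mult_commute)
  have eig': "\<And>u. u \<in> V \<Longrightarrow> mu * x u = (\<Sum>v\<in>V. M u v * x v)"
    "\<And>u. u \<in> V \<Longrightarrow> nu * w u = (\<Sum>v\<in>V. M u v * w v)"
    using eig by (simp_all add: shadow_eigenpair_def M_def)
  have "nu = mu"
    using symmetric_pos_eigvecs_same_eigval[OF finite_vertices _ M(1) pos(2,1) eig'(2,1)] v by blast
  then have on_edge: "w u / x u = w u' / x u'" if "e \<in> E" "u \<in> e" "u' \<in> e" for e u u'
  proof (cases "u = u'")
    case False
    then have "M u u' > 0"
      using shadow_mult_pos[OF finite_edges that] by (simp add: M_def)
    moreover have "\<And>u. u \<in> V \<Longrightarrow> mu * w u = (\<Sum>v\<in>V. M u v * w v)"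
      using eig'(2) \<open>nu = mu\<close> by simp
    ultimately show ?thesis
      using symmetric_pos_eigvecs_ratio_eq[where x = w and p = x, OF finite_vertices M pos(2,1) _ eig'(1)]
        edge_vertex that by blast
  qed simp
  show "w u / x u = w u' / x u'" if "u \<in> V" "u' \<in> V" for u u'
    using hyp_connected_const[OF conn _ that, where f = "\<lambda>u. w u / x u"] on_edge by blast
qed simp

lemma principal_eigvec_shadow_eq:
  fixes x :: "'v \<Rightarrow> real"
  assumes conn: "hyp_connected V E" and pos: "\<And>u. u \<in> V \<Longrightarrow> x u > 0"
    and eig: "shadow_eigenpair V E mu x" and v: "v \<in> V"
  shows "principal_eigvec_shadow V E v = x v / sqrt (\<Sum>u\<in>V. x u ^ 2)"
proof -
  define \<theta> where "\<theta> = sqrt (\<Sum>u\<in>V. x u ^ 2)"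
  define x' where "x' u = (if u \<in> V then x u / \<theta> else 0)" for u
  have "(\<Sum>u\<in>V. x u ^ 2) > 0" using finite_vertices v by (intro sum_pos zero_less_power pos) auto
  then have \<theta>: "\<theta> > 0" "\<theta> ^ 2 = (\<Sum>u\<in>V. x u ^ 2)" "\<theta> ^ 2 > 0" by (simp_all add: \<theta>_def)
  have pos': "\<And>u. u \<in> V \<Longrightarrow> x' u > 0" using pos \<theta> by (simp add: x'_def)
  have norm': "(\<Sum>u\<in>V. x' u ^ 2) = 1"
    using \<theta> by (simp add: x'_def power_divide sum_divide_distrib[symmetric])
  have "(\<Sum>v\<in>V. real (shadow_mult E u v) * x' v) = (\<Sum>v\<in>V. real (shadow_mult E u v) * x v) / \<theta>" for u
    by (simp add: x'_def sum_divide_distrib)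
  then have eig': "shadow_eigenpair V E mu x'"
    using eig by (simp add: shadow_eigenpair_def x'_def)
  have "principal_eigvec_shadow V E = x'"
    unfolding principal_eigvec_shadow_def
  proof (rule the_equality)
    fix w assume "(\<forall>v\<in>V. w v > 0) \<and> (\<forall>v. v \<notin> V \<longrightarrow> w v = 0) \<and> (\<Sum>v\<in>V. w v ^ 2) = 1 \<and>
      (\<exists>nu. \<forall>u\<in>V. nu * w u = (\<Sum>v\<in>V. real (shadow_mult E u v) * w v))"
    then obtain nu where "\<forall>v\<in>V. w v > 0" "\<forall>v. v \<notin> V \<longrightarrow> w v = 0" "(\<Sum>v\<in>V. w v ^ 2) = 1"
      "shadow_eigenpair V E nu w"
      by (auto simp: shadow_eigenpair_def)
    then show "w = x'"
      using pos_shadow_eigvec_unique[OF conn pos' _ eig'] norm' by (auto simp: x'_def)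
  qed (use pos' norm' eig' in \<open>auto simp: x'_def shadow_eigenpair_def\<close>)
  then show ?thesis using v by (simp add: x'_def \<theta>_def)
qed

lemma principal_eigvec_shadow_le_iff:
  fixes x :: "'v \<Rightarrow> real"
  assumes "hyp_connected V E" "\<And>u. u \<in> V \<Longrightarrow> x u > 0" "shadow_eigenpair V E mu x"
    and "u \<in> V" "v \<in> V"
  shows "principal_eigvec_shadow V E u \<le> principal_eigvec_shadow V E v \<longleftrightarrow> x u \<le> x v"
proof -
  have "(\<Sum>w\<in>V. x w ^ 2) > 0" using finite_vertices assms(4) by (intro sum_pos zero_less_power assms(2)) auto
  then show ?thesis
    by (simp add: principal_eigvec_shadow_eq[OF assms(1-3)] assms(4,5) divide_le_cancel)
qed

end

lemma rank_class_one:
  fixes x :: "'v \<Rightarrow> real"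
  assumes "finite V" "V \<noteq> {}"
  shows "rank_class V x 1 = {v\<in>V. \<forall>u\<in>V. x u \<le> x v}"
proof -
  have set: "set (rank_values V x) = x ` V" and sorted: "sorted_wrt (\<ge>) (rank_values V x)"
    using assms(1) by (simp_all add: rank_values_def sorted_wrt_rev)
  then obtain h t where ht: "rank_values V x = h # t"
    using assms by (cases "rank_values V x") auto
  have max: "x u \<le> h" if "u \<in> V" for u
    using that set sorted unfolding ht by auto
  have "h \<in> x ` V" using set unfolding ht by auto
  then obtain w where "w \<in> V" "x w = h" by auto
  then have "(\<forall>u\<in>V. x u \<le> x v) \<longleftrightarrow> x v = h" if "v \<in> V" for v
    using max[OF that] max by force
  then show ?thesis
    by (auto simp: rank_class_def ht)
qed

lemma umbral_index_eq_oneI: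
  assumes "rank_class V (principal_eigvec_hyp k V E) 1 \<noteq> rank_class V (principal_eigvec_shadow V E) 1"
  shows "umbral_index k V E = 1"
  using assms unfolding umbral_index_def Let_def by (auto intro!: Least_equality)

section \<open>The pleated bowtie\<close>

lemma bowtie_V_iff [simp]:
  "C \<in> bowtie_V t" "L j \<in> bowtie_V t \<longleftrightarrow> 1 \<le> j \<and> j \<le> t + 2" "R j \<in> bowtie_V t \<longleftrightarrow> 1 \<le> j \<and> j \<le> t + 2"
  by (auto simp: bowtie_V_def)

lemma bowtie_V_cases:
  assumes "v \<in> bowtie_V t"
  obtains "v = C" | "v = L 1" | j where "v = L j" "2 \<le> j" "j \<le> t + 2" | "v = R 1" | "v = R 2"
    | j where "v = R j" "3 \<le> j" "j \<le> t + 2"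
proof (cases v)
  case (L j)
  then show ?thesis using that assms by (cases "j = 1") auto
next
  case (R j)
  then show ?thesis using that assms by (cases "j = 1 \<or> j = 2") auto
qed (use that in auto)

lemma bowtie_E_eq:
  "bowtie_E t = insert {C, R 1, R 2}
     ((\<lambda>j. {C, L 1, L j}) ` {2..t + 2} \<union> (\<lambda>j. {R 1, R 2, R j}) ` {3..t + 2})"
  by (auto simp: bowtie_E_def)

lemma bowtie_three_uniform: "three_uniform_hypergraph (bowtie_V t) (bowtie_E t)"
proof
  show "finite (bowtie_V t)" by (simp add: bowtie_V_def)
  fix e assume "e \<in> bowtie_E t"
  then show "e \<subseteq> bowtie_V t" and "card e = 3"
    by (auto simp: bowtie_E_eq)
qed

interpretation bowtie: three_uniform_hypergraph "bowtie_V t" "bowtie_E t" for t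
  by (rule bowtie_three_uniform)

lemma bowtie_connected: "hyp_connected (bowtie_V t) (bowtie_E t)"
proof (rule hyp_connectedI[where w = C])
  let ?A = "\<Union>e\<in>bowtie_E t. e \<times> e"
  have edge: "(u, v) \<in> ?A\<^sup>*" if "e \<in> bowtie_E t" "u \<in> e" "v \<in> e" for e u v
    using that by blast
  have eL: "{C, L 1, L j} \<in> bowtie_E t" if "2 \<le> j" "j \<le> t + 2" for j
    using that by (auto simp: bowtie_E_def)
  have eC: "{C, R 1, R 2} \<in> bowtie_E t" by (simp add: bowtie_E_def)
  have eR: "{R 1, R 2, R j} \<in> bowtie_E t" if "3 \<le> j" "j \<le> t + 2" for j
    using that by (auto simp: bowtie_E_def)
  have CL: "(C, L j) \<in> ?A\<^sup>*" if "1 \<le> j" "j \<le> t + 2" for j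
    using edge[OF eL[of "max 2 j"]] that by (simp add: max_def)
  have CR: "(C, R 1) \<in> ?A\<^sup>*" "(C, R 2) \<in> ?A\<^sup>*"
    by (simp_all add: edge[OF eC])
  have RR: "(R 1, R j) \<in> ?A\<^sup>*" if "3 \<le> j" "j \<le> t + 2" for j
    by (simp add: edge[OF eR[OF that]])
  fix u assume "u \<in> bowtie_V t"
  then show "(C, u) \<in> ?A\<^sup>*"
    by (cases rule: bowtie_V_cases) (use CL CR RR in \<open>auto intro: rtrancl_trans\<close>)
qed

lemma bowtie_edge_sum:
  "(\<Sum>e\<in>bowtie_E t. G e)
     = G {C, R 1, R 2} + (\<Sum>j=2..t + 2. G {C, L 1, L j}) + (\<Sum>j=3..t + 2. G {R 1, R 2, R j})"
proof -
  let ?EL = "(\<lambda>j. {C, L 1, L j}) ` {2..t + 2}" and ?ER = "(\<lambda>j. {R 1, R 2, R j}) ` {3..t + 2}"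
  have inj: "inj_on (\<lambda>j. {C, L 1, L j}) {2..t + 2}" "inj_on (\<lambda>j. {R 1, R 2, R j}) {3..t + 2}"
  proof (rule_tac [!] inj_onI)
    fix i j assume "i \<in> {2..t + 2}" and eq: "{C, L 1, L i} = {C, L 1, L j}"
    have "L i \<in> {C, L 1, L i}" by simp
    then have "L i \<in> {C, L 1, L j}" by (simp only: eq)
    then show "i = j" using \<open>i \<in> {2..t + 2}\<close> by auto
  next
    fix i j assume "i \<in> {3..t + 2}" and eq: "{R 1, R 2, R i} = {R 1, R 2, R j}"
    have "R i \<in> {R 1, R 2, R i}" by simp
    then have "R i \<in> {R 1, R 2, R j}" by (simp only: eq)
    then show "i = j" using \<open>i \<in> {3..t + 2}\<close> by auto
  qed
  have "C \<in> e" "R 1 \<notin> e" if "e \<in> ?EL" for e using that by auto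
  moreover have "C \<notin> e" if "e \<in> ?ER" for e using that by auto
  ultimately have new: "{C, R 1, R 2} \<notin> ?EL \<union> ?ER" and disj: "?EL \<inter> ?ER = {}" by blast+
  have "(\<Sum>e\<in>bowtie_E t. G e) = G {C, R 1, R 2} + (\<Sum>e\<in>?EL \<union> ?ER. G e)"
    unfolding bowtie_E_eq using new by (intro sum.insert) auto
  also have "\<dots> = G {C, R 1, R 2} + (\<Sum>e\<in>?EL. G e) + (\<Sum>e\<in>?ER. G e)"
    using disj by (simp add: sum.union_disjoint add.assoc)
  finally show ?thesis
    by (simp only: sum.reindex[OF inj(1)] sum.reindex[OF inj(2)] o_def)
qed

lemma bowtie_edges_at_sum:
  "(\<Sum>e\<in>{e\<in>bowtie_E t. i \<in> e}. F (e - {i}))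
     = (if i \<in> {C, R 1, R 2} then F ({C, R 1, R 2} - {i}) else 0)
       + (\<Sum>j=2..t + 2. if i \<in> {C, L 1, L j} then F ({C, L 1, L j} - {i}) else 0)
       + (\<Sum>j=3..t + 2. if i \<in> {R 1, R 2, R j} then F ({R 1, R 2, R j} - {i}) else 0)"
  unfolding sum.inter_filter[OF bowtie.finite_edges] by (rule bowtie_edge_sum)

definition bowtie_profile :: "real \<Rightarrow> real \<Rightarrow> real \<Rightarrow> real \<Rightarrow> real \<Rightarrow> bt_vertex \<Rightarrow> real" where
  "bowtie_profile c a b r s v =
     (case v of C \<Rightarrow> c | L j \<Rightarrow> if j = 1 then a else b | R j \<Rightarrow> if j \<le> 2 then r else s)"

lemma bowtie_profile_hyp_eigenpair:
  fixes p c a b r s :: real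
  assumes "p * c^2 = r^2 + (t + 1) * (a * b)" "p * a^2 = (t + 1) * (c * b)" "p * b^2 = c * a"
    "p * r^2 = c * r + t * (r * s)" "p * s^2 = r^2"
  shows "hyp_eigenpair 3 (bowtie_V t) (bowtie_E t) p (bowtie_profile c a b r s)"
  unfolding hyp_eigenpair_def
proof
  fix i assume "i \<in> bowtie_V t"
  then show "p * bowtie_profile c a b r s i ^ (3 - 1)
      = (\<Sum>e\<in>{e\<in>bowtie_E t. i \<in> e}. \<Prod>u\<in>e - {i}. bowtie_profile c a b r s u)"
    by (cases rule: bowtie_V_cases)
      (use assms in \<open>simp_all add: bowtie_edges_at_sum bowtie_profile_def insert_Diff_if power2_eq_square\<close>)
qed

lemma bowtie_profile_shadow_eigenpair:
  fixes m c a b r s :: real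
  assumes "m * c = 2 * r + (t + 1) * (a + b)" "m * a = (t + 1) * (c + b)" "m * b = c + a"
    "m * r = c + r + t * (r + s)" "m * s = 2 * r"
  shows "shadow_eigenpair (bowtie_V t) (bowtie_E t) m (bowtie_profile c a b r s)"
  unfolding shadow_eigenpair_def bowtie.shadow_adjacency_sum
proof
  fix i assume "i \<in> bowtie_V t"
  then show "m * bowtie_profile c a b r s i
      = (\<Sum>e\<in>{e\<in>bowtie_E t. i \<in> e}. \<Sum>u\<in>e - {i}. bowtie_profile c a b r s u)"
    by (cases rule: bowtie_V_cases)
      (use assms in \<open>simp_all add: bowtie_edges_at_sum bowtie_profile_def insert_Diff_if algebra_simps\<close>)
qed

lemma bowtie_profile_pos:
  "c > 0 \<Longrightarrow> a > 0 \<Longrightarrow> b > 0 \<Longrightarrow> r > 0 \<Longrightarrow> s > 0 \<Longrightarrow> bowtie_profile c a b r s v > 0"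
  by (simp add: bowtie_profile_def split: bt_vertex.split)

lemma bowtie_profile_le_center:
  "a \<le> c \<Longrightarrow> b \<le> c \<Longrightarrow> r \<le> c \<Longrightarrow> s \<le> c \<Longrightarrow> bowtie_profile c a b r s v \<le> c"
  by (simp add: bowtie_profile_def split: bt_vertex.split)

lemma bowtie8_hyp_root:
  obtains q :: real where "2165/1000 \<le> q" "q \<le> 2166/1000" "(q^6 - 81) * (q^3 - 8)^2 = q^6"
proof -
  let ?f = "\<lambda>q::real. (q^6 - 81) * (q^3 - 8)^2 - q^6"
  have "continuous_on {2165/1000..2166/1000} ?f" by (intro continuous_intros)
  moreover have "?f (2165/1000) \<le> 0" "0 \<le> ?f (2166/1000)" by (simp_all add: power_divide)
  ultimately obtain q where "2165/1000 \<le> q" "q \<le> 2166/1000" "?f q = 0"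
    using IVT'[of ?f "2165/1000" 0 "2166/1000"] by auto
  then show ?thesis using that by simp
qed

text \<open>With \<open>c = 1\<close> and \<open>p = q\<^sup>2\<close>, the eigen-equations at all vertices other than \<open>C\<close>
are solved by \<open>a = k\<^sup>2/q\<^sup>2\<close>, \<open>b = k/q\<^sup>2\<close> (\<open>k\<^sup>3 = 9\<close>), \<open>r = q/(q\<^sup>3 - 8)\<close>, \<open>s = r/q\<close>;
the equation at \<open>C\<close> is then the polynomial of \<open>bowtie8_hyp_root\<close>. Its root
satisfies \<open>q\<^sup>3 < q + 8\<close> only barely, giving \<open>r \<approx> 1.004 > c\<close>.\<close>
lemma bowtie8_hyp_eigenpair:
  obtains y p where "\<And>v. v \<in> bowtie_V 8 \<Longrightarrow> y v > 0"
    "hyp_eigenpair 3 (bowtie_V 8) (bowtie_E 8) p y" "y C < y (R 1)"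
proof -
  obtain q :: real where q: "2165/1000 \<le> q" "q \<le> 2166/1000" and root: "(q^6 - 81) * (q^3 - 8)^2 = q^6"
    using bowtie8_hyp_root by blast
  define k where "k = root 3 (9::real)"
  define a b r s where "a = k^2 / q^2" and "b = k / q^2" and "r = q / (q^3 - 8)" and "s = r / q"
  have k: "k > 0" "k^3 = 9" by (simp_all add: k_def)
  have "q^3 \<ge> (2165/1000)^3" "q^3 \<le> (2166/1000)^3" using q by (simp_all add: power_mono)
  moreover have "(2165/1000::real)^3 > 8" "(2166/1000::real)^3 < 2165/1000 + 8"
    by (simp_all add: power_divide)
  ultimately have q3: "q^3 > 8" "q^3 < q + 8" using q by linarith+
  have q0: "q > 0" using q by simp
  have pos: "a > 0" "b > 0" "r > 0" "s > 0"
    using k q0 q3 by (simp_all add: a_def b_def r_def s_def)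
  have "r > 1" using q3 by (simp add: r_def)
  have ha: "a * q^2 = k^2" and hb: "b * q^2 = k" and hr: "r * (q^3 - 8) = q" and hs: "s * q = r"
    using q0 q3 by (simp_all add: a_def b_def r_def s_def)
  have "(q^4 * (q^3 - 8)^2) * (q^2 - (r^2 + 9 * (a * b))) = 0" using ha hb hr k(2) root by algebra
  then have eC: "q^2 * 1^2 = r^2 + (real 8 + 1) * (a * b)" using q0 q3 by simp
  have "q^2 * (q^2 * a^2 - 9 * b) = 0" using ha hb k(2) by algebra
  then have eL1: "q^2 * a^2 = (real 8 + 1) * (1 * b)" using q0 by simp
  have "q^2 * (q^2 * b^2 - a) = 0" using ha hb by algebra
  then have eL: "q^2 * b^2 = 1 * a" using q0 by simp
  have "q * (q^2 * r^2 - (r + 8 * (r * s))) = r * (r * (q^3 - 8) - q) + 8 * r * (r - s * q)"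
    by algebra
  then have eR1: "q^2 * r^2 = 1 * r + real 8 * (r * s)" using hr hs q0 by simp
  have eR: "q^2 * s^2 = r^2" using hs by (metis mult.commute power_mult_distrib)
  have "hyp_eigenpair 3 (bowtie_V 8) (bowtie_E 8) (q^2) (bowtie_profile 1 a b r s)"
    by (rule bowtie_profile_hyp_eigenpair[OF eC eL1 eL eR1 eR])
  moreover have "\<And>v. bowtie_profile 1 a b r s v > 0" using pos by (simp add: bowtie_profile_pos)
  moreover have "bowtie_profile 1 a b r s C < bowtie_profile 1 a b r s (R 1)"
    using \<open>r > 1\<close> by (simp add: bowtie_profile_def)
  ultimately show ?thesis using that by blast
qed

lemma bowtie8_shadow_root:
  obtains m :: real where "23/2 \<le> m" "m \<le> 12"
    "(m^2 - 9)^2 * (m^2 - 9*m - 16) - 81 * (m + 1)^2 * (m^2 - 9*m - 16) = 2 * m^2 * (m^2 - 9)"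
proof -
  let ?f = "\<lambda>m::real. (m^2 - 9)^2 * (m^2 - 9*m - 16) - 81 * (m + 1)^2 * (m^2 - 9*m - 16) - 2 * m^2 * (m^2 - 9)"
  have "continuous_on {23/2..12} ?f" by (intro continuous_intros)
  moreover have "?f (23/2) \<le> 0" "0 \<le> ?f 12" by (simp_all add: power_divide)
  ultimately obtain m where "23/2 \<le> m" "m \<le> 12" "?f m = 0"
    using IVT'[of ?f "23/2" 0 12] by auto
  then show ?thesis using that by simp
qed

text \<open>With \<open>c = 1\<close>, the equations at all vertices other than \<open>C\<close> give
\<open>a = 9(m + 1)/(m\<^sup>2 - 9)\<close>, \<open>b = (1 + a)/m\<close>, \<open>r = m/(m\<^sup>2 - 9m - 16)\<close>, \<open>s = 2r/m\<close>,
and the equation at \<open>C\<close> becomes the polynomial of \<open>bowtie8_shadow_root\<close>.\<close>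
lemma bowtie8_shadow_eigenpair:
  obtains x m where "\<And>v. v \<in> bowtie_V 8 \<Longrightarrow> x v > 0"
    "shadow_eigenpair (bowtie_V 8) (bowtie_E 8) m x" "\<And>v. x v \<le> x C"
proof -
  obtain m :: real where m: "23/2 \<le> m" "m \<le> 12"
    and root: "(m^2 - 9)^2 * (m^2 - 9*m - 16) - 81 * (m + 1)^2 * (m^2 - 9*m - 16) = 2 * m^2 * (m^2 - 9)"
    using bowtie8_shadow_root by blast
  have "m * (m - 10) \<ge> 23/2 * (3/2)" using m by (intro mult_mono) auto
  then have D: "m^2 - 10*m - 16 > 0" by (simp add: power2_eq_square algebra_simps)
  have m0: "m > 0" using m by simp
  have D9: "m^2 - 9 > 0" "m^2 - 9*m - 16 > 0" using D m by auto
  define a b r s where "a = 9 * (m + 1) / (m^2 - 9)" and "b = (1 + a) / m"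
    and "r = m / (m^2 - 9*m - 16)" and "s = 2 * r / m"
  have ha: "a * (m^2 - 9) = 9 * (m + 1)" and hb: "m * b = 1 + a"
    and hr: "r * (m^2 - 9*m - 16) = m" and hs: "m * s = 2 * r"
    using m0 D9 by (simp_all add: a_def b_def r_def s_def)
  have "a > 0" "r > 0" using m0 D9 by (simp_all add: a_def r_def)
  then have pos: "a > 0" "b > 0" "r > 0" "s > 0" using m0 by (simp_all add: b_def s_def)
  have "a < 1" using D m by (simp add: a_def)
  moreover have "b < 1" using \<open>a < 1\<close> m by (simp add: b_def)
  moreover have "r < 1" using D m0 by (simp add: r_def)
  moreover have "s < 1" using \<open>r < 1\<close> m by (simp add: s_def)
  ultimately have le: "\<And>v. bowtie_profile 1 a b r s v \<le> 1"
    by (simp add: bowtie_profile_le_center)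
  have "(m * (m^2 - 9) * (m^2 - 9*m - 16)) * (m * 1 - (2 * r + 9 * a + 9 * b)) = 0"
    using ha hb hr root by algebra
  then have eC: "m * 1 = 2 * r + (real 8 + 1) * (a + b)" using m0 D9 by simp
  have "m * (m * a - (9 * 1 + 9 * b)) = 0" using ha hb by algebra
  then have eL1: "m * a = (real 8 + 1) * (1 + b)" using m0 by simp
  have "m * (m * r - (1 + 9 * r + 8 * s)) = r * (m^2 - 9*m - 16) - m - 8 * (m * s - 2 * r)"
    by algebra
  then have eR1: "m * r = 1 + r + real 8 * (r + s)" using hr hs m0 by simp
  have "shadow_eigenpair (bowtie_V 8) (bowtie_E 8) m (bowtie_profile 1 a b r s)"
    by (rule bowtie_profile_shadow_eigenpair[OF eC eL1 hb eR1 hs])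
  moreover have "\<And>v. bowtie_profile 1 a b r s v > 0" using pos by (simp add: bowtie_profile_pos)
  moreover have "bowtie_profile 1 a b r s C = 1" by (simp add: bowtie_profile_def)
  ultimately show ?thesis using that le by metis
qed

theorem theorem4p3:
  shows "umbral_index 3 (bowtie_V 8) (bowtie_E 8) = 1
     \<and> rank_class (bowtie_V 8) (principal_eigvec_hyp 3 (bowtie_V 8) (bowtie_E 8)) 1
       \<noteq> rank_class (bowtie_V 8) (principal_eigvec_shadow (bowtie_V 8) (bowtie_E 8)) 1"
proof -
  let ?V = "bowtie_V 8" and ?E = "bowtie_E 8"
  obtain y p where y: "\<And>v. v \<in> ?V \<Longrightarrow> y v > 0" "hyp_eigenpair 3 ?V ?E p y" "y C < y (R 1)"
    using bowtie8_hyp_eigenpair by metis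
  obtain x m where x: "\<And>v. v \<in> ?V \<Longrightarrow> x v > 0" "shadow_eigenpair ?V ?E m x" "\<And>v. x v \<le> x C"
    using bowtie8_shadow_eigenpair by metis
  have V: "finite ?V" "?V \<noteq> {}" using bowtie.finite_vertices bowtie_V_iff(1) by blast+
  have "principal_eigvec_hyp 3 ?V ?E C < principal_eigvec_hyp 3 ?V ?E (R 1)"
    using y by (simp add: bowtie.principal_eigvec_hyp_less_iff[OF bowtie_connected y(1,2)])
  then have "C \<notin> rank_class ?V (principal_eigvec_hyp 3 ?V ?E) 1"
    unfolding rank_class_one[OF V] using bowtie_V_iff(3)[of 1 8] by (auto simp: not_le)
  moreover have "C \<in> rank_class ?V (principal_eigvec_shadow ?V ?E) 1"
    unfolding rank_class_one[OF V] using x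
    by (simp add: bowtie.principal_eigvec_shadow_le_iff[OF bowtie_connected x(1,2)])
  ultimately have "rank_class ?V (principal_eigvec_hyp 3 ?V ?E) 1 \<noteq> rank_class ?V (principal_eigvec_shadow ?V ?E) 1"
    by blast
  then show ?thesis by (simp add: umbral_index_eq_oneI)
qed

end
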